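(* Let $n\ge1$, $1\le i\le n$, and let $\mathfrak{g}$ be of type $B_n$. Then \[ \widetilde{\operatorname{ps}}(\widetilde\omega_i)=\begin{bmatrix}2n+1\\ i\end{bmatrix}_q. \]
   Context: For type $B_n$: $\widetilde\omega_i=\omega_i=\epsilon_1+\cdots+\epsilon_i$ for $1\le i<n$ and $\widetilde\omega_n=2\omega_n=\epsilon_1+\cdots+\epsilon_n$. The principal specialization $\operatorname{ps}(\lambda)$ is $\operatorname{ch}V(\lambda)$ with $x_j=q^j$ substituted, and $\widetilde{\operatorname{ps}}(\lambda)=q^{-\eta}\operatorname{ps}(\lambda)$ with $\eta$ the lowest exponent of $q$ in $\operatorname{ps}(\lambda)$. $\begin{bmatrix}a\\ b\end{bmatrix}_q$ is the Gaussian binomial coefficient. *)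

theory Defs
  imports "HOL-Computational_Algebra.Formal_Laurent_Series" "HOL-Combinatorics.Permutations"
begin

text \<open>Weights are given by their coordinates w.r.t. eps_1,...,eps_n,
  as functions nat => rat (only the coordinates 1..n are relevant).
  Formal variables x_j = e^(eps_j); the principal specialization substitutes x_j := q^j,
  so e^mu becomes q^(sum_j j * mu_j).\<close>

text \<open>Weyl group of B_n: signed permutations w = (sigma, s) acting by
  (w mu)_j = s_j * mu_(sigma^-1 j); its sign is det w = sign(sigma) * prod s_j.\<close>
definition weylB :: "nat \<Rightarrow> ((nat \<Rightarrow> nat) \<times> (nat \<Rightarrow> int)) set" where
  "weylB n = {(\<sigma>, s). \<sigma> permutes {1..n} \<and> (\<forall>j\<in>{1..n}. s j \<in> {1, -1}) \<and> (\<forall>j. j \<notin> {1..n} \<longrightarrow> s j = 1)}"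

definition wsignB :: "nat \<Rightarrow> (nat \<Rightarrow> nat) \<times> (nat \<Rightarrow> int) \<Rightarrow> int" where
  "wsignB n w = sign (fst w) * (\<Prod>j\<in>{1..n}. snd w j)"

definition wactB :: "(nat \<Rightarrow> nat) \<times> (nat \<Rightarrow> int) \<Rightarrow> (nat \<Rightarrow> rat) \<Rightarrow> (nat \<Rightarrow> rat)" where
  "wactB w \<mu> = (\<lambda>j. of_int (snd w j) * \<mu> (inv (fst w) j))"

text \<open>rho = half-sum of positive roots of B_n = (n - 1/2, n - 3/2, ..., 1/2).\<close>
definition rhoB :: "nat \<Rightarrow> nat \<Rightarrow> rat" where
  "rhoB n = (\<lambda>j. if 1 \<le> j \<and> j \<le> n then of_nat n - of_nat j + 1/2 else 0)"

definition ps_exp :: "nat \<Rightarrow> (nat \<Rightarrow> rat) \<Rightarrow> int" where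
  "ps_exp n \<mu> = \<lfloor>\<Sum>j\<in>{1..n}. of_nat j * \<mu> j\<rfloor>"

text \<open>Specialized Weyl numerator sum_w sgn(w) e^(w(lambda+rho) - rho)
  (the factor e^(-rho) makes all exponents integral).\<close>
definition weyl_numB :: "nat \<Rightarrow> (nat \<Rightarrow> rat) \<Rightarrow> rat fls" where
  "weyl_numB n lam = (\<Sum>w\<in>weylB n. of_int (wsignB n w) *
       fls_X_intpow (ps_exp n (\<lambda>j. wactB w (\<lambda>k. lam k + rhoB n k) j - rhoB n j)))"

text \<open>Character of V(lambda) via the Weyl character formula, specialized x_j := q^j.\<close>
definition psB :: "nat \<Rightarrow> (nat \<Rightarrow> rat) \<Rightarrow> rat fls" where
  "psB n lam = weyl_numB n lam / weyl_numB n (\<lambda>_. 0)"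

definition ps_tildeB :: "nat \<Rightarrow> (nat \<Rightarrow> rat) \<Rightarrow> rat fls" where
  "ps_tildeB n lam = fls_shift (fls_subdegree (psB n lam)) (psB n lam)"

definition omega_tildeB :: "nat \<Rightarrow> nat \<Rightarrow> rat" where
  "omega_tildeB i = (\<lambda>j. if 1 \<le> j \<and> j \<le> i then 1 else 0)"

fun qbinom :: "nat \<Rightarrow> nat \<Rightarrow> rat fls" where
  "qbinom a 0 = 1"
| "qbinom 0 (Suc b) = 0"
| "qbinom (Suc a) (Suc b) = qbinom a b + fls_X ^ (Suc b) * qbinom a (Suc b)"

end

(* After the substitution q := q^2, the specialised Weyl numerator of lambda is, up to a power
   of q, the sum over signed permutations (sigma, s) of sgn(sigma) prod_j s_j q^(j s_j b_k) with
   k = sigma^-1 j, where b_k = 2 (lambda + rho)_k are odd integers. Summing over the signs first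
   gives the determinant det (x_k^m - x_k^-m) with x_k = q^(b_k), and Chebyshev polynomials
   reduce it to a Vandermonde determinant: the numerator is
   prod_k (x_k - 1/x_k) * prod_(k<l) ((x_l + 1/x_l) - (x_k + 1/x_k)).
   For lambda = 0 and lambda = omega_i the sequence b is 2n+1, 2n-1, ..., 1 with its first, resp.
   its (i+1)-st entry deleted, so each numerator times the factor belonging to its deleted entry
   is the same full product. The two deleted factors are products of q-integers whose quotient
   is q^e [2n+1 choose i]_(q^2), and normalising the lowest degree leaves the Gaussian binomial. *)

theory Submission
  imports Defs "Jordan_Normal_Form.Determinant"
begin

section \<open>Determinants\<close>

lemma det_mat_scale_rows:
  fixes a :: "nat \<Rightarrow> 'a::comm_ring_1"
  shows "det (mat n n (\<lambda>(i,j). a i * B i j)) = prod a {0..<n} * det (mat n n (\<lambda>(i,j). B i j))"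
proof -
  have "mat n n (\<lambda>(i,j). a i * B i j) = mat\<^sub>r n n (\<lambda>i. a i \<cdot>\<^sub>v vec n (B i))"
    and "mat n n (\<lambda>(i,j). B i j) = mat\<^sub>r n n (\<lambda>i. vec n (B i))"
    by (auto intro!: eq_matI)
  then show ?thesis by (simp add: det_rows_mul)
qed

lemma det_vandermonde_Suc:
  fixes c :: "nat \<Rightarrow> 'a::idom"
  shows "det (mat (Suc n) (Suc n) (\<lambda>(k,j). c k ^ j)) =
    det (mat n n (\<lambda>(k,j). (c (Suc k) - c 0) * c (Suc k) ^ j))"
proof -
  define V where "V = mat (Suc n) (Suc n) (\<lambda>(k,j). c k ^ j)"
  \<comment> \<open>Subtracting \<open>c 0\<close> times each column from the next one clears the first row.\<close>
  define E :: "'a mat" where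
    "E = mat (Suc n) (Suc n) (\<lambda>(i,j). if i = j then 1 else if Suc i = j then - c 0 else 0)"
  define A where "A = mat n n (\<lambda>(k,j). (c (Suc k) - c 0) * c (Suc k) ^ j)"
  define B where "B = four_block_mat (mat 1 1 (\<lambda>_. 1)) (0\<^sub>m 1 n) (mat n 1 (\<lambda>_. 1)) A"
  have V: "V \<in> carrier_mat (Suc n) (Suc n)" and E: "E \<in> carrier_mat (Suc n) (Suc n)"
    by (auto simp: V_def E_def)
  have "det E = prod_list (diag_mat E)"
    by (rule det_upper_triangular[OF _ E]) (auto simp: E_def upper_triangular_def)
  also have "diag_mat E = map (\<lambda>_. 1) [0..<Suc n]"
    unfolding diag_mat_def by (rule map_cong) (auto simp: E_def)
  finally have det_E: "det E = 1" by (simp add: map_replicate_const)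
  have "V * E = B"
  proof (rule eq_matI)
    fix i j assume "i < dim_row B" "j < dim_col B"
    hence i: "i < Suc n" and j: "j < Suc n" by (auto simp: B_def A_def)
    have "(V * E) $$ (i,j) =
        (\<Sum>k<Suc n. (if k = j then c i ^ k else 0) + (if Suc k = j then - c 0 * c i ^ k else 0))"
      using i j by (auto simp: V_def E_def scalar_prod_def atLeast0LessThan intro!: sum.cong)
    also have "\<dots> = c i ^ j + (if j = 0 then 0 else - c 0 * c i ^ (j - 1))"
      using j by (cases j) (auto simp: sum.distrib)
    also have "\<dots> = B $$ (i,j)"
      using i j by (cases i; cases j) (auto simp: B_def A_def algebra_simps)
    finally show "(V * E) $$ (i,j) = B $$ (i,j)" .
  qed (auto simp: V_def B_def A_def E_def)
  then have "det V = det B"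
    using det_mult[OF V E] det_E by simp
  also have "\<dots> = det A"
    unfolding B_def by (subst det_four_block_mat_upper_right_zero) (auto simp: A_def det_single)
  finally show ?thesis by (simp add: V_def A_def)
qed

lemma det_vandermonde:
  fixes c :: "nat \<Rightarrow> 'a::idom"
  shows "det (mat n n (\<lambda>(k,j). c k ^ j)) = (\<Prod>l<n. \<Prod>k<l. c l - c k)"
proof (induction n arbitrary: c)
  case 0
  then show ?case by simp
next
  case (Suc n)
  have "det (mat (Suc n) (Suc n) (\<lambda>(k,j). c k ^ j)) =
      (\<Prod>k<n. c (Suc k) - c 0) * (\<Prod>l<n. \<Prod>k<l. c (Suc l) - c (Suc k))"
    using det_vandermonde_Suc[of n c] det_mat_scale_rows[where a = "\<lambda>k. c (Suc k) - c 0" and n = n]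
      Suc.IH[of "c \<circ> Suc"]
    by (simp add: atLeast0LessThan)
  also have "\<dots> = (\<Prod>l<n. \<Prod>k<Suc l. c (Suc l) - c k)"
    by (simp only: prod.lessThan_Suc_shift prod.distrib)
  also have "\<dots> = (\<Prod>l<Suc n. \<Prod>k<l. c l - c k)"
    by (simp only: prod.lessThan_Suc_shift) simp
  finally show ?case .
qed

text \<open>The Chebyshev polynomials of the second kind in the normalisation \<open>U\<^sub>m(x/2)\<close>.\<close>
fun cheb_U :: "nat \<Rightarrow> 'a::comm_ring_1 poly" where
  "cheb_U 0 = 1"
| "cheb_U (Suc 0) = [:0, 1:]"
| "cheb_U (Suc (Suc m)) = [:0, 1:] * cheb_U (Suc m) - cheb_U m"

lemma cheb_U_monic: "degree (cheb_U m :: 'a::idom poly) = m \<and> coeff (cheb_U m :: 'a poly) m = 1"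
proof (induction m rule: cheb_U.induct)
  case (3 m)
  let ?p = "[:0, 1:] * (cheb_U (Suc m) :: 'a poly)"
  have "degree ?p \<le> Suc (Suc m)" and "coeff ?p (Suc (Suc m)) = 1"
    using 3 by (simp_all add: degree_pCons_le coeff_pCons)
  moreover have "degree (cheb_U m :: 'a poly) \<le> Suc (Suc m)" "coeff (cheb_U m :: 'a poly) (Suc (Suc m)) = 0"
    using 3 by (simp_all add: coeff_eq_0)
  ultimately show ?case
    by (metis (no_types, lifting) cheb_U.simps(3) coeff_diff degree_diff_le diff_zero le_antisym
        le_degree one_neq_zero)
qed auto

lemma cheb_U_eval:
  fixes x :: "'a::field"
  assumes "x \<noteq> 0"
  shows "(x - inverse x) * poly (cheb_U m) (x + inverse x) = x ^ Suc m - inverse x ^ Suc m"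
proof (induction m rule: cheb_U.induct)
  case (3 m)
  have "(x - inverse x) * poly (cheb_U (Suc (Suc m))) (x + inverse x) =
      (x + inverse x) * ((x - inverse x) * poly (cheb_U (Suc m)) (x + inverse x))
      - (x - inverse x) * poly (cheb_U m) (x + inverse x)"
    by (simp add: algebra_simps)
  also have "\<dots> = (x + inverse x) * (x ^ Suc (Suc m) - inverse x ^ Suc (Suc m))
      - (x ^ Suc m - inverse x ^ Suc m)"
    by (simp only: 3)
  also have "\<dots> = x ^ Suc (Suc (Suc m)) - inverse x ^ Suc (Suc (Suc m))"
    using assms by (simp add: field_simps)
  finally show ?case .
qed (use assms in \<open>auto simp: field_simps power2_eq_square\<close>)

text \<open>The entry \<open>x^(m+1) - x^-(m+1)\<close> is \<open>x - 1/x\<close> times a monic polynomial of degree \<open>m\<close> in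
  \<open>x + 1/x\<close>, so the determinant reduces to a Vandermonde determinant in the \<open>x\<^sub>k + 1/x\<^sub>k\<close>.\<close>
lemma det_alternant:
  fixes x :: "nat \<Rightarrow> 'a::field"
  assumes x: "\<And>k. k < n \<Longrightarrow> x k \<noteq> 0"
  shows "det (mat n n (\<lambda>(k,m). x k ^ Suc m - inverse (x k) ^ Suc m)) =
    (\<Prod>k<n. x k - inverse (x k)) * (\<Prod>l<n. \<Prod>k<l. (x l + inverse (x l)) - (x k + inverse (x k)))"
proof -
  define y where "y k = x k + inverse (x k)" for k
  define V where "V = mat n n (\<lambda>(k,j). y k ^ j)"
  define T :: "'a mat" where "T = mat n n (\<lambda>(j,m). coeff (cheb_U m) j)"
  have V: "V \<in> carrier_mat n n" and T: "T \<in> carrier_mat n n" by (auto simp: V_def T_def)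
  have "mat n n (\<lambda>(k,m). x k ^ Suc m - inverse (x k) ^ Suc m) =
        mat n n (\<lambda>(k,m). (x k - inverse (x k)) * poly (cheb_U m) (y k))"
    by (rule eq_matI) (auto simp: cheb_U_eval x y_def)
  then have "det (mat n n (\<lambda>(k,m). x k ^ Suc m - inverse (x k) ^ Suc m)) =
      (\<Prod>k<n. x k - inverse (x k)) * det (mat n n (\<lambda>(k,m). poly (cheb_U m) (y k)))"
    by (simp add: det_mat_scale_rows atLeast0LessThan)
  also have "mat n n (\<lambda>(k,m). poly (cheb_U m) (y k)) = V * T"
  proof (rule eq_matI)
    fix i j assume "i < dim_row (V * T)" "j < dim_col (V * T)"
    hence i: "i < n" and j: "j < n" by (auto simp: V_def T_def)
    have "(V * T) $$ (i,j) = (\<Sum>k<n. coeff (cheb_U j) k * y i ^ k)"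
      using i j by (auto simp: V_def T_def scalar_prod_def atLeast0LessThan mult.commute intro: sum.cong)
    also have "\<dots> = (\<Sum>k\<le>degree (cheb_U j :: 'a poly). coeff (cheb_U j) k * y i ^ k)"
      using j cheb_U_monic[of j, where 'a='a]
      by (intro sum.mono_neutral_cong_right) (auto simp: coeff_eq_0)
    also have "\<dots> = poly (cheb_U j) (y i)" by (simp add: poly_altdef)
    finally show "mat n n (\<lambda>(k,m). poly (cheb_U m) (y k)) $$ (i,j) = (V * T) $$ (i,j)"
      using i j by simp
  qed (auto simp: V_def T_def)
  also have "det (V * T) = det V * det T" by (rule det_mult[OF V T])
  also have "det T = prod_list (diag_mat T)"
    by (intro det_upper_triangular[OF _ T])
      (auto simp: T_def upper_triangular_def cheb_U_monic intro!: coeff_eq_0)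
  also have "diag_mat T = map (\<lambda>_. 1) [0..<n]"
    unfolding diag_mat_def by (rule map_cong) (auto simp: T_def cheb_U_monic)
  also have "det V = (\<Prod>l<n. \<Prod>k<l. y l - y k)" unfolding V_def by (rule det_vandermonde)
  finally show ?thesis by (simp add: y_def map_replicate_const)
qed

lemma sum_permutes_transfer:
  fixes G :: "'b \<Rightarrow> 'b \<Rightarrow> 'c::comm_ring_1"
  assumes f: "bij_betw f A B" and f': "\<And>x. x \<in> A \<Longrightarrow> f' (f x) = x" and A: "finite A"
  shows "(\<Sum>p | p permutes A. of_int (sign p) * (\<Prod>a\<in>A. G (f a) (f (p a)))) =
         (\<Sum>t | t permutes B. of_int (sign t) * (\<Prod>b\<in>B. G b (t b)))"
proof -
  have f'_f: "\<And>y. y \<in> B \<Longrightarrow> f (f' y) = y"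
    using f f' by (auto simp: bij_betw_def)
  then have f'_bij: "bij_betw f' B A"
    using f f' by (intro bij_betw_byWitness[where f' = f]) (auto simp: bij_betw_def)
  show ?thesis
  proof (rule sum.reindex_bij_witness[where j = "\<lambda>p x. if x \<in> B then f (p (f' x)) else x"
                                       and i = "\<lambda>t x. if x \<in> A then f' (t (f x)) else x"])
    fix p assume "p \<in> {p. p permutes A}"
    then interpret permutes_bij_finite p A B f f' "\<lambda>x. if x \<in> B then f (p (f' x)) else x"
      using f f' A by unfold_locales (auto simp: bij_betw_def)
    show "(\<lambda>x. if x \<in> B then f (p (f' x)) else x) \<in> {t. t permutes B}"
      using permutes_p' by simp
    show "(\<lambda>x. if x \<in> A then f' (if f x \<in> B then f (p (f' (f x))) else f x) else x) = p"
      using permutes_p by (auto simp: f_in_B f'_f permutes_in_image permutes_not_in fun_eq_iff)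
    have "(\<Prod>b\<in>B. G b (if b \<in> B then f (p (f' b)) else b)) = (\<Prod>a\<in>A. G (f a) (f (p a)))"
      by (subst prod.reindex_bij_betw[OF bij_f, symmetric]) (auto simp: f_in_B f'_f intro!: prod.cong)
    then show "of_int (sign (\<lambda>x. if x \<in> B then f (p (f' x)) else x)) *
        (\<Prod>b\<in>B. G b (if b \<in> B then f (p (f' b)) else b)) =
        of_int (sign p) * (\<Prod>a\<in>A. G (f a) (f (p a)))"
      using sign_p' by simp
  next
    fix t assume "t \<in> {t. t permutes B}"
    then interpret permutes_bij t B A f' f "\<lambda>x. if x \<in> A then f' (t (f x)) else x"
      using f'_bij f'_f by unfold_locales (auto simp: bij_betw_def)
    show "(\<lambda>x. if x \<in> A then f' (t (f x)) else x) \<in> {p. p permutes A}"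
      using permutes_p' by simp
    show "(\<lambda>x. if x \<in> B then f (if f' x \<in> A then f' (t (f (f' x))) else f' x) else x) = t"
      using permutes_p by (auto simp: f_in_B f'_f permutes_in_image permutes_not_in fun_eq_iff)
  qed
qed

lemma det_mat_Suc_Suc:
  fixes G :: "nat \<Rightarrow> nat \<Rightarrow> 'a::comm_ring_1"
  shows "det (mat n n (\<lambda>(j,k). G (Suc j) (Suc k))) =
    (\<Sum>t | t permutes {1..n}. of_int (sign t) * (\<Prod>j\<in>{1..n}. G j (t j)))"
proof -
  have "bij_betw Suc {0..<n} {1..n}"
    by (simp add: bij_betw_def atLeastLessThanSuc_atLeastAtMost image_Suc_atLeastLessThan[symmetric])
  then have "(\<Sum>p | p permutes {0..<n}. of_int (sign p) * (\<Prod>j\<in>{0..<n}. G (Suc j) (Suc (p j)))) =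
      (\<Sum>t | t permutes {1..n}. of_int (sign t) * (\<Prod>j\<in>{1..n}. G j (t j)))"
    by (rule sum_permutes_transfer[where f' = "\<lambda>x. x - 1"]) auto
  moreover have "det (mat n n (\<lambda>(j,k). G (Suc j) (Suc k))) =
      (\<Sum>p | p permutes {0..<n}. of_int (sign p) * (\<Prod>j\<in>{0..<n}. G (Suc j) (Suc (p j))))"
    by (subst det_def'[of _ n]) (auto simp: permutes_in_image intro!: sum.cong prod.cong)
  ultimately show ?thesis by simp
qed

section \<open>Laurent monomials and the substitution \<open>q := q\<^sup>2\<close>\<close>

lemma fls_X_intpow_sum:
  "fls_X_intpow (\<Sum>a\<in>A. f a) = (\<Prod>a\<in>A. fls_X_intpow (f a) :: 'a::comm_semiring_1 fls)"
proof (induction A rule: infinite_finite_induct)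
  case (insert a A)
  have "fls_X_intpow (\<Sum>a\<in>insert a A. f a) = (fls_X_intpow (f a + (\<Sum>a\<in>A. f a)) :: 'a fls)"
    using insert by simp
  also have "\<dots> = fls_X_intpow (f a) * fls_X_intpow (\<Sum>a\<in>A. f a)"
    by (rule fls_X_intpow_times_fls_X_intpow[symmetric])
  finally show ?case
    using insert by simp
qed simp_all

lemma fls_X_intpow_eq_1_iff: "(fls_X_intpow m :: 'a::zero_neq_one fls) = 1 \<longleftrightarrow> m = 0"
proof
  assume "fls_X_intpow m = (1 :: 'a fls)"
  then have "fls_nth (fls_X_intpow m) m = fls_nth (1 :: 'a fls) m" by simp
  then show "m = 0" by (auto split: if_splits)
qed simp

lemma fls_compose_power_sum:
  "fls_compose_power (\<Sum>a\<in>A. f a) d = (\<Sum>a\<in>A. fls_compose_power (f a) d)"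
  by (induction A rule: infinite_finite_induct) simp_all

lemma fls_compose_power_prod:
  assumes "d > 0"
  shows "fls_compose_power (\<Prod>a\<in>A. f a :: 'a::idom fls) d = (\<Prod>a\<in>A. fls_compose_power (f a) d)"
  using assms by (induction A rule: infinite_finite_induct) simp_all

lemma fls_compose_power_inj:
  assumes "d > 0" and "fls_compose_power f d = fls_compose_power g d"
  shows "f = g"
proof (rule fls_eqI)
  fix m
  have "fls_nth (fls_compose_power f d) (int d * m) = fls_nth (fls_compose_power g d) (int d * m)"
    using assms(2) by simp
  then show "fls_nth f m = fls_nth g m"
    using assms(1) by (simp add: fls_nth_compose_power)
qed

lemma fls_compose_power_of_int: "d > 0 \<Longrightarrow> fls_compose_power (of_int c :: 'a::ring_1 fls) d = of_int c"
  by (simp add: fls_of_int)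

section \<open>The doubled Weyl numerator of type \<open>B\<^sub>n\<close>\<close>

definition sign_vectors :: "nat \<Rightarrow> (nat \<Rightarrow> int) set" where
  "sign_vectors n = {s. (\<forall>j\<in>{1..n}. s j \<in> {1, -1}) \<and> (\<forall>j. j \<notin> {1..n} \<longrightarrow> s j = 1)}"

lemma weylB_eq_Times: "weylB n = {p. p permutes {1..n}} \<times> sign_vectors n"
  by (auto simp: weylB_def sign_vectors_def)

lemma sum_sign_vectors_prod:
  fixes g :: "nat \<Rightarrow> int \<Rightarrow> 'a::comm_ring_1"
  shows "(\<Sum>s\<in>sign_vectors n. \<Prod>j\<in>{1..n}. g j (s j)) = (\<Prod>j\<in>{1..n}. g j 1 + g j (-1))"
proof -
  have "(\<Prod>j\<in>{1..n}. g j 1 + g j (-1)) = (\<Sum>h\<in>PiE {1..n} (\<lambda>_. {1, -1}). \<Prod>j\<in>{1..n}. g j (h j))"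
    by (subst prod_sum_PiE[symmetric]) auto
  also have "\<dots> = (\<Sum>s\<in>sign_vectors n. \<Prod>j\<in>{1..n}. g j (s j))"
  proof (rule sum.reindex_bij_witness[where i = "\<lambda>s. restrict s {1..n}"
                                       and j = "\<lambda>h j. if j \<in> {1..n} then h j else 1"])
    fix h assume h: "h \<in> PiE {1..n} (\<lambda>_. {1, -1::int})"
    show "restrict (\<lambda>j. if j \<in> {1..n} then h j else 1) {1..n} = h"
      using h by (auto simp: PiE_def extensional_def)
    show "(\<lambda>j. if j \<in> {1..n} then h j else 1) \<in> sign_vectors n"
      using h by (auto simp: sign_vectors_def)
  qed (auto simp: sign_vectors_def)
  finally show ?thesis ..
qed

text \<open>The coordinates \<open>2(\<lambda> + \<rho>)\<^sub>k\<close> of an integral weight \<open>\<lambda>\<close> with coordinates \<open>L\<close>; they are odd.\<close>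
definition twice_shifted :: "nat \<Rightarrow> (nat \<Rightarrow> int) \<Rightarrow> nat \<Rightarrow> int" where
  "twice_shifted n L k = 2 * L k + 2 * int n - 2 * int k + 1"

definition two_rho_degree :: "nat \<Rightarrow> int" where
  "two_rho_degree n = (\<Sum>j\<in>{1..n}. int j * (2 * int n - 2 * int j + 1))"

lemma two_ps_exp_weyl_orbit:
  fixes L :: "nat \<Rightarrow> int" and lam :: "nat \<Rightarrow> rat"
  assumes lam: "\<And>k. k \<in> {1..n} \<Longrightarrow> lam k = of_int (L k)"
    and p: "p permutes {1..n}" and s: "s \<in> sign_vectors n"
  shows "2 * ps_exp n (\<lambda>j. wactB (p, s) (\<lambda>k. lam k + rhoB n k) j - rhoB n j) =
    (\<Sum>j\<in>{1..n}. int j * s j * twice_shifted n L (inv_into UNIV p j)) - two_rho_degree n"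
proof -
  let ?\<mu> = "\<lambda>j. wactB (p, s) (\<lambda>k. lam k + rhoB n k) j - rhoB n j"
  define d where "d j = s j * twice_shifted n L (inv_into UNIV p j) - (2 * int n - 2 * int j + 1)" for j
  have inv_p: "inv_into UNIV p j \<in> {1..n}" if "j \<in> {1..n}" for j
    using permutes_in_image[OF permutes_inv[OF p]] that by blast
  have d_even: "2 * (d j div 2) = d j" if "j \<in> {1..n}" for j
  proof -
    have "s j = 1 \<or> s j = -1" using s that by (auto simp: sign_vectors_def)
    then have "odd (s j * twice_shifted n L (inv_into UNIV p j))"
      by (auto simp: twice_shifted_def)
    then show ?thesis by (simp add: d_def)
  qed
  have coord: "of_nat j * (wactB (p, s) (\<lambda>k. lam k + rhoB n k) j - rhoB n j) =
      (of_int (int j * (d j div 2)) :: rat)" if j: "j \<in> {1..n}" for j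
  proof -
    have "(of_int (d j div 2) :: rat) = of_int (d j) / 2"
      using d_even[OF j] by (metis nonzero_mult_div_cancel_left of_int_mult of_int_numeral zero_neq_numeral)
    moreover have "of_nat j * (wactB (p, s) (\<lambda>k. lam k + rhoB n k) j - rhoB n j) =
        of_nat j * (of_int (d j) / (2 :: rat))"
      using j inv_p[OF j] by (simp add: wactB_def rhoB_def lam d_def twice_shifted_def field_simps)
    ultimately show ?thesis by (simp only: of_int_mult of_int_of_nat_eq)
  qed
  have "ps_exp n ?\<mu> = (\<Sum>j\<in>{1..n}. int j * (d j div 2))"
  proof -
    have "ps_exp n ?\<mu> = \<lfloor>\<Sum>j\<in>{1..n}. (of_int (int j * (d j div 2)) :: rat)\<rfloor>"
      unfolding ps_exp_def by (intro arg_cong[where f = floor] sum.cong) (auto simp: coord)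
    then show ?thesis by (simp only: of_int_sum[symmetric] floor_of_int)
  qed
  then have "2 * ps_exp n ?\<mu> = (\<Sum>j\<in>{1..n}. int j * d j)"
    by (simp add: sum_distrib_left d_even mult.left_commute)
  then show ?thesis
    by (simp add: d_def two_rho_degree_def right_diff_distrib sum_subtractf mult.assoc)
qed

definition sym_monom :: "int \<Rightarrow> rat fls" where
  "sym_monom a = fls_X_intpow a + fls_X_intpow (- a)"

definition alternant_prod :: "(nat \<Rightarrow> int) \<Rightarrow> nat \<Rightarrow> rat fls" where
  "alternant_prod g N = (\<Prod>k<N. fls_X_intpow (g k) - fls_X_intpow (- g k)) *
     (\<Prod>l<N. \<Prod>k<l. sym_monom (g l) - sym_monom (g k))"

lemma det_alternant_fls_X_intpow:
  "det (mat n n (\<lambda>(k,m). fls_X_intpow (int (Suc m) * g k) - fls_X_intpow (- (int (Suc m) * g k)))) =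
   alternant_prod g n"
proof -
  have "mat n n (\<lambda>(k,m). fls_X_intpow (int (Suc m) * g k) - fls_X_intpow (- (int (Suc m) * g k))) =
      (mat n n (\<lambda>(k,m). fls_X_intpow (g k) ^ Suc m - inverse (fls_X_intpow (g k)) ^ Suc m) :: rat fls mat)"
    by (simp only: fls_inverse_X_intpow fls_X_intpow_power mult_minus_right)
  also have "det \<dots> = alternant_prod g n"
    by (subst det_alternant) (simp_all add: alternant_prod_def sym_monom_def fls_inverse_X_intpow)
  finally show ?thesis .
qed

lemma doubled_weyl_term:
  fixes L :: "nat \<Rightarrow> int" and lam :: "nat \<Rightarrow> rat"
  assumes lam: "\<And>k. k \<in> {1..n} \<Longrightarrow> lam k = of_int (L k)"
    and p: "p permutes {1..n}" and s: "s \<in> sign_vectors n"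
  shows "fls_compose_power (of_int (wsignB n (p, s)) *
      fls_X_intpow (ps_exp n (\<lambda>j. wactB (p, s) (\<lambda>k. lam k + rhoB n k) j - rhoB n j))) 2 =
    of_int (sign p) * fls_X_intpow (- two_rho_degree n) *
      (\<Prod>j\<in>{1..n}. of_int (s j) * fls_X_intpow (int j * s j * twice_shifted n L (inv_into UNIV p j)) :: rat fls)"
proof -
  have "fls_compose_power (fls_X_intpow (ps_exp n (\<lambda>j. wactB (p, s) (\<lambda>k. lam k + rhoB n k) j - rhoB n j)))
      2 = (fls_X_intpow (- two_rho_degree n +
        (\<Sum>j\<in>{1..n}. int j * s j * twice_shifted n L (inv_into UNIV p j))) :: rat fls)"
    using two_ps_exp_weyl_orbit[OF lam p s] by simp
  also have "\<dots> = fls_X_intpow (- two_rho_degree n) *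
      (\<Prod>j\<in>{1..n}. fls_X_intpow (int j * s j * twice_shifted n L (inv_into UNIV p j)))"
    by (simp only: fls_X_intpow_sum[symmetric] fls_X_intpow_times_fls_X_intpow)
  finally have X: "fls_compose_power (fls_X_intpow
      (ps_exp n (\<lambda>j. wactB (p, s) (\<lambda>k. lam k + rhoB n k) j - rhoB n j)) :: rat fls) 2 =
    fls_X_intpow (- two_rho_degree n) *
      (\<Prod>j\<in>{1..n}. fls_X_intpow (int j * s j * twice_shifted n L (inv_into UNIV p j)))" .
  have S: "fls_compose_power (of_int (wsignB n (p, s))) 2 =
      of_int (sign p) * (\<Prod>j\<in>{1..n}. of_int (s j) :: rat fls)"
    by (subst fls_compose_power_of_int) (simp_all add: wsignB_def of_int_prod)
  show ?thesis
    unfolding fls_compose_power_mult X S by (simp only: prod.distrib mult_ac)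
qed

lemma doubled_weyl_numB:
  fixes L :: "nat \<Rightarrow> int" and lam :: "nat \<Rightarrow> rat"
  assumes lam: "\<And>k. k \<in> {1..n} \<Longrightarrow> lam k = of_int (L k)"
  shows "fls_compose_power (weyl_numB n lam) 2 =
    fls_X_intpow (- two_rho_degree n) * alternant_prod (\<lambda>k. twice_shifted n L (Suc k)) n"
proof -
  define F :: "nat \<Rightarrow> nat \<Rightarrow> rat fls" where
    "F j k = fls_X_intpow (int j * twice_shifted n L k) - fls_X_intpow (- (int j * twice_shifted n L k))"
    for j k
  have sum_signs: "(\<Sum>s\<in>sign_vectors n. of_int (sign p) * fls_X_intpow (- two_rho_degree n) *
      (\<Prod>j\<in>{1..n}. of_int (s j) * fls_X_intpow (int j * s j * twice_shifted n L (inv_into UNIV p j)))) =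
    of_int (sign p) * fls_X_intpow (- two_rho_degree n) * (\<Prod>j\<in>{1..n}. F j (inv_into UNIV p j))" for p
    using sum_sign_vectors_prod[where
        g = "\<lambda>j e. of_int e * fls_X_intpow (int j * e * twice_shifted n L (inv_into UNIV p j)) :: rat fls"]
    by (simp add: F_def flip: sum_distrib_left)
  have transpose: "(\<Prod>j\<in>{1..n}. F j (inv_into UNIV p j)) = (\<Prod>k\<in>{1..n}. F (p k) k)"
    if p: "p permutes {1..n}" for p
    using prod.reindex_bij_betw[OF permutes_imp_bij[OF p], of "\<lambda>j. F j (inv_into UNIV p j)"]
      permutes_inverses(2)[OF p] by simp
  have "fls_compose_power (weyl_numB n lam) 2 = (\<Sum>p | p permutes {1..n}. \<Sum>s\<in>sign_vectors n.
      fls_compose_power (of_int (wsignB n (p, s)) *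
        fls_X_intpow (ps_exp n (\<lambda>j. wactB (p, s) (\<lambda>k. lam k + rhoB n k) j - rhoB n j))) 2)"
    by (simp only: weyl_numB_def weylB_eq_Times sum.cartesian_product split_def prod.collapse
      fls_compose_power_sum)
  also have "\<dots> = (\<Sum>p | p permutes {1..n}. \<Sum>s\<in>sign_vectors n.
      of_int (sign p) * fls_X_intpow (- two_rho_degree n) *
      (\<Prod>j\<in>{1..n}. of_int (s j) * fls_X_intpow (int j * s j * twice_shifted n L (inv_into UNIV p j))))"
    by (intro sum.cong refl doubled_weyl_term[OF lam]) simp_all
  also have "\<dots> = (\<Sum>p | p permutes {1..n}.
      of_int (sign p) * fls_X_intpow (- two_rho_degree n) * (\<Prod>k\<in>{1..n}. F (p k) k))"
    by (intro sum.cong refl) (simp only: sum_signs mem_Collect_eq transpose)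
  also have "\<dots> = fls_X_intpow (- two_rho_degree n) * det (mat n n (\<lambda>(k,m). F (Suc m) (Suc k)))"
    by (simp add: det_mat_Suc_Suc[where G = "\<lambda>k j. F j k"] sum_distrib_left mult_ac)
  also have "det (mat n n (\<lambda>(k,m). F (Suc m) (Suc k))) = alternant_prod (\<lambda>k. twice_shifted n L (Suc k)) n"
    unfolding F_def by (rule det_alternant_fls_X_intpow)
  finally show ?thesis .
qed

section \<open>Deleting one entry from the alternant product\<close>

definition skip_at :: "nat \<Rightarrow> nat \<Rightarrow> nat" where
  "skip_at r k = (if k < r then k else Suc k)"

lemma prod_lessThan_Suc_skip_at:
  fixes h :: "nat \<Rightarrow> 'a::comm_monoid_mult"
  assumes "r \<le> n"
  shows "(\<Prod>k<Suc n. h k) = h r * (\<Prod>k<n. h (skip_at r k))"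
proof -
  have "bij_betw (skip_at r) {..<n} ({..<Suc n} - {r})"
    using assms
    by (intro bij_betw_byWitness[where f' = "\<lambda>k. if k < r then k else k - 1"]) (auto simp: skip_at_def)
  then have "prod h ({..<Suc n} - {r}) = (\<Prod>k<n. h (skip_at r k))"
    by (rule prod.reindex_bij_betw[symmetric])
  moreover have "(\<Prod>k<Suc n. h k) = h r * prod h ({..<Suc n} - {r})"
    using assms by (intro prod.remove) auto
  ultimately show ?thesis by simp
qed

lemma prod_pairs_skip_at:
  fixes g :: "nat \<Rightarrow> nat \<Rightarrow> 'a::comm_monoid_mult"
  assumes "r \<le> n"
  shows "(\<Prod>l<Suc n. \<Prod>k<l. g l k) =
    (\<Prod>k<r. g r k) * (\<Prod>l\<in>{r<..n}. g l r) * (\<Prod>l<n. \<Prod>k<l. g (skip_at r l) (skip_at r k))"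
proof -
  have row: "(\<Prod>k<skip_at r l. g (skip_at r l) k) =
      (if r \<le> l then g (Suc l) r else 1) * (\<Prod>k<l. g (skip_at r l) (skip_at r k))" for l
  proof (cases "r \<le> l")
    case True
    then show ?thesis
      using prod_lessThan_Suc_skip_at[OF True, of "g (Suc l)"] by (simp add: skip_at_def)
  next
    case False
    then show ?thesis by (auto simp: skip_at_def intro!: prod.cong)
  qed
  have "(\<Prod>l<n. if r \<le> l then g (Suc l) r else 1) = (\<Prod>l\<in>{r..<n}. g (Suc l) r)"
    by (intro prod.mono_neutral_cong_right) auto
  also have "\<dots> = (\<Prod>l\<in>{r<..n}. g l r)"
    by (intro prod.reindex_bij_witness[where i = "\<lambda>l. l - 1" and j = Suc]) auto
  finally have column: "(\<Prod>l<n. if r \<le> l then g (Suc l) r else 1) = (\<Prod>l\<in>{r<..n}. g l r)" .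
  show ?thesis
    unfolding prod_lessThan_Suc_skip_at[OF assms, of "\<lambda>l. \<Prod>k<l. g l k"] row prod.distrib column
    by (simp only: mult_ac)
qed

definition alternant_factor :: "(nat \<Rightarrow> int) \<Rightarrow> nat \<Rightarrow> nat \<Rightarrow> rat fls" where
  "alternant_factor g r n = (fls_X_intpow (g r) - fls_X_intpow (- g r)) *
     (\<Prod>k<r. sym_monom (g r) - sym_monom (g k)) * (\<Prod>l\<in>{r<..n}. sym_monom (g l) - sym_monom (g r))"

lemma alternant_prod_Suc_skip_at:
  assumes "r \<le> n"
  shows "alternant_prod g (Suc n) = alternant_prod (\<lambda>k. g (skip_at r k)) n * alternant_factor g r n"
  unfolding alternant_prod_def alternant_factor_def
    prod_lessThan_Suc_skip_at[OF assms, of "\<lambda>k. fls_X_intpow (g k) - fls_X_intpow (- g k)"]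
    prod_pairs_skip_at[OF assms, of "\<lambda>l k. sym_monom (g l) - sym_monom (g k)"]
  by (simp only: mult_ac)

lemma fls_X_intpow_diff_uminus:
  "fls_X_intpow a - fls_X_intpow (- a) = fls_X_intpow (- a) * (fls_X_intpow (2 * a) - 1 :: rat fls)"
proof -
  have "fls_X_intpow (- a) * fls_X_intpow (2 * a) = (fls_X_intpow (- a + 2 * a) :: rat fls)"
    by (rule fls_X_intpow_times_fls_X_intpow)
  then show ?thesis by (simp add: right_diff_distrib)
qed

lemma sym_monom_diff:
  "sym_monom a - sym_monom b =
    - (fls_X_intpow (- b) * ((fls_X_intpow (b - a) - 1) * (fls_X_intpow (a + b) - 1)))"
proof -
  have "fls_X_intpow (- b) * fls_X_intpow (b - a) = (fls_X_intpow (- a) :: rat fls)"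
    and "fls_X_intpow (- b) * fls_X_intpow (a + b) = (fls_X_intpow a :: rat fls)"
    and "fls_X_intpow (- b) * (fls_X_intpow (b - a) * fls_X_intpow (a + b)) = (fls_X_intpow b :: rat fls)"
    by (simp_all only: fls_X_intpow_times_fls_X_intpow) simp_all
  then show ?thesis by (simp add: sym_monom_def algebra_simps)
qed

lemma alternant_prod_nonzero:
  assumes pos: "\<And>k. k < N \<Longrightarrow> g k > 0"
    and distinct: "\<And>k l. k < l \<Longrightarrow> l < N \<Longrightarrow> g k \<noteq> g l"
  shows "alternant_prod g N \<noteq> 0"
proof -
  have "fls_X_intpow (g k) - fls_X_intpow (- g k) \<noteq> (0 :: rat fls)" if "k < N" for k
    unfolding fls_X_intpow_diff_uminus using pos[OF that]
    by (simp only: mult_eq_0_iff fls_X_intpow_nonzero right_minus_eq fls_X_intpow_eq_1_iff) simp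
  moreover have "sym_monom (g l) - sym_monom (g k) \<noteq> 0" if "k < l" "l < N" for k l
    unfolding sym_monom_diff using pos[of k] pos[of l] distinct[OF that] that
    by (simp only: neg_equal_0_iff_equal mult_eq_0_iff fls_X_intpow_nonzero right_minus_eq
        fls_X_intpow_eq_1_iff) simp
  ultimately show ?thesis
    by (simp add: alternant_prod_def)
qed

section \<open>Gaussian binomials and \<open>q\<close>-factorials\<close>

definition qfact :: "nat \<Rightarrow> rat fls" where
  "qfact m = (\<Prod>d\<in>{1..m}. fls_X ^ d - 1)"

definition qint2 :: "nat \<Rightarrow> rat fls" where
  "qint2 d = fls_X_intpow (2 * int d) - 1"

definition qfact2 :: "nat \<Rightarrow> rat fls" where
  "qfact2 m = (\<Prod>d\<in>{1..m}. qint2 d)"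

lemma fls_compose_power_qfact: "fls_compose_power (qfact m) 2 = qfact2 m"
  by (simp add: qfact_def qfact2_def qint2_def fls_compose_power_prod fls_X_intpow_power mult.commute)

lemma qfact_Suc: "qfact (Suc m) = qfact m * (fls_X ^ Suc m - 1)"
  by (simp add: qfact_def)

lemma qfact_nonzero_subdegree: "qfact m \<noteq> 0 \<and> fls_subdegree (qfact m) = 0"
proof (induction m)
  case (Suc m)
  have "fls_X ^ Suc m - 1 \<noteq> (0 :: rat fls)"
    by (rule fls_nonzeroI[of _ 0]) simp
  moreover have "fls_subdegree (fls_X ^ Suc m - 1 :: rat fls) = 0"
    by (rule fls_subdegree_eqI) auto
  ultimately show ?case
    using Suc.IH by (simp add: qfact_Suc)
qed (simp add: qfact_def)

lemma qfact2_nonzero: "qfact2 m \<noteq> 0"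
  using qfact_nonzero_subdegree[of m] fls_compose_power_inj[of 2 "qfact m" 0]
  by (auto simp: fls_compose_power_qfact)

lemma qbinom_eq_0: "a < b \<Longrightarrow> qbinom a b = 0"
proof (induction a arbitrary: b)
  case 0 then show ?case by (cases b) auto
next
  case (Suc a) then show ?case by (cases b) auto
qed

lemma qbinom_mult_qfact: "b \<le> a \<Longrightarrow> qbinom a b * qfact b * qfact (a - b) = qfact a"
proof (induction a arbitrary: b)
  case 0 then show ?case by (simp add: qfact_def)
next
  case (Suc a)
  show ?case
  proof (cases b)
    case 0 then show ?thesis by (simp add: qfact_def)
  next
    case (Suc c)
    with Suc.prems have c: "c \<le> a" by simp
    have left: "qbinom a c * qfact (Suc c) * qfact (a - c) = qfact a * (fls_X ^ Suc c - 1)"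
      using Suc.IH[OF c] by (simp add: qfact_Suc mult_ac)
    have right: "qbinom a (Suc c) * qfact (Suc c) * qfact (a - c) = qfact a * (fls_X ^ (a - c) - 1)"
    proof (cases "c = a")
      case True then show ?thesis by (simp add: qbinom_eq_0)
    next
      case False
      with c have "a - c = Suc (a - Suc c)" by simp
      then show ?thesis
        using Suc.IH[of "Suc c"] False c by (simp add: qfact_Suc mult_ac)
    qed
    have X_power: "fls_X ^ Suc c * fls_X ^ (a - c) = (fls_X ^ Suc a :: rat fls)"
      using c by (simp flip: power_add)
    have "qbinom (Suc a) b * qfact b * qfact (Suc a - b) =
        qbinom a c * qfact (Suc c) * qfact (a - c) +
        fls_X ^ Suc c * (qbinom a (Suc c) * qfact (Suc c) * qfact (a - c))"
      by (simp add: Suc algebra_simps del: power_Suc)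
    also have "\<dots> = qfact a * (fls_X ^ Suc a - 1)"
      unfolding left right by (simp add: algebra_simps X_power del: power_Suc)
    finally show ?thesis by (simp add: qfact_Suc)
  qed
qed

lemma qbinom_nonzero_subdegree:
  assumes "b \<le> a"
  shows "qbinom a b \<noteq> 0 \<and> fls_subdegree (qbinom a b) = 0"
proof -
  have prod: "qbinom a b * qfact b * qfact (a - b) = qfact a"
    using assms by (rule qbinom_mult_qfact)
  then have "qbinom a b \<noteq> 0"
    using qfact_nonzero_subdegree[of a] by auto
  moreover have "fls_subdegree (qbinom a b * qfact b * qfact (a - b)) = fls_subdegree (qbinom a b)"
    using calculation qfact_nonzero_subdegree by simp
  ultimately show ?thesis
    using prod qfact_nonzero_subdegree[of a] by simp
qed

section \<open>The deleted factor for the ladder \<open>2n+1, 2n-1, \<dots>, 1\<close>\<close>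

text \<open>Deleting the entry \<open>r = 0\<close> leaves the coordinates
  of \<open>2\<rho>\<close>, deleting the entry \<open>r = i\<close> those of \<open>2(\<omega>\<^sub>i + \<rho>)\<close>.\<close>
definition odd_ladder :: "nat \<Rightarrow> nat \<Rightarrow> int" where
  "odd_ladder n r = 2 * int n + 1 - 2 * int r"

definition factor_degree :: "nat \<Rightarrow> nat \<Rightarrow> int" where
  "factor_degree n r = (int n - int r + 1) * odd_ladder n r + (\<Sum>k<r. odd_ladder n k)"

lemma prod_atMost_split_at:
  fixes f :: "nat \<Rightarrow> 'a::comm_monoid_mult"
  assumes "r \<le> n"
  shows "(\<Prod>k\<le>n. f k) = (\<Prod>k<r. f k) * f r * (\<Prod>k\<in>{r<..n}. f k)"
proof -
  have "{..n} = {..<r} \<union> insert r {r<..n}"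
    using assms by auto
  then show ?thesis
    by (simp only:) (subst prod.union_disjoint, auto simp: mult.assoc)
qed

lemma qfact2_split: "a \<le> b \<Longrightarrow> qfact2 b = qfact2 a * (\<Prod>d\<in>{Suc a..b}. qint2 d)"
  unfolding qfact2_def by (subst prod.union_disjoint[symmetric]) (auto intro: prod.cong)

lemma prod_sym_monom_odd_ladder_below:
  assumes rn: "r \<le> n"
  shows "(\<Prod>k<r. sym_monom (odd_ladder n r) - sym_monom (odd_ladder n k)) =
    (-1) ^ r * fls_X_intpow (- (\<Sum>k<r. odd_ladder n k)) *
      (qfact2 r * (\<Prod>k<r. qint2 (2 * n + 1 - r - k)))"
proof -
  let ?b = "odd_ladder n"
  have "(\<Prod>k<r. sym_monom (?b r) - sym_monom (?b k)) =
      (\<Prod>k<r. - (fls_X_intpow (- ?b k) * (qint2 (r - k) * qint2 (2 * n + 1 - r - k))))"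
  proof (intro prod.cong)
    fix k assume "k \<in> {..<r}"
    then have "?b k - ?b r = 2 * int (r - k)" "?b r + ?b k = 2 * int (2 * n + 1 - r - k)"
      using rn by (auto simp: odd_ladder_def of_nat_diff)
    then show "sym_monom (?b r) - sym_monom (?b k) =
        - (fls_X_intpow (- ?b k) * (qint2 (r - k) * qint2 (2 * n + 1 - r - k)))"
      by (simp only: sym_monom_diff qint2_def)
  qed simp
  moreover have "(\<Prod>k<r. qint2 (r - k)) = qfact2 r"
    unfolding qfact2_def by (rule prod.reindex_bij_witness[where i = "\<lambda>d. r - d" and j = "\<lambda>k. r - k"]) auto
  moreover have "(\<Prod>k<r. fls_X_intpow (- ?b k)) = (fls_X_intpow (- (\<Sum>k<r. ?b k)) :: rat fls)"
    using fls_X_intpow_sum[of "\<lambda>k. - ?b k" "{..<r}", symmetric] by (simp only: sum_negf)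
  ultimately show ?thesis
    by (simp add: prod_uminus prod.distrib)
qed

lemma prod_sym_monom_odd_ladder_above:
  assumes rn: "r \<le> n"
  shows "(\<Prod>l\<in>{r<..n}. sym_monom (odd_ladder n l) - sym_monom (odd_ladder n r)) =
    (-1) ^ (n - r) * fls_X_intpow (- (int (n - r) * odd_ladder n r)) *
      (qfact2 (n - r) * (\<Prod>l\<in>{r<..n}. qint2 (2 * n + 1 - r - l)))"
proof -
  let ?b = "odd_ladder n"
  have "(\<Prod>l\<in>{r<..n}. sym_monom (?b l) - sym_monom (?b r)) =
      (\<Prod>l\<in>{r<..n}. - (fls_X_intpow (- ?b r) * (qint2 (l - r) * qint2 (2 * n + 1 - r - l))))"
  proof (intro prod.cong)
    fix l assume "l \<in> {r<..n}"
    then have "?b r - ?b l = 2 * int (l - r)" "?b l + ?b r = 2 * int (2 * n + 1 - r - l)"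
      by (auto simp: odd_ladder_def of_nat_diff)
    then show "sym_monom (?b l) - sym_monom (?b r) =
        - (fls_X_intpow (- ?b r) * (qint2 (l - r) * qint2 (2 * n + 1 - r - l)))"
      by (simp only: sym_monom_diff qint2_def)
  qed simp
  moreover have "(\<Prod>l\<in>{r<..n}. qint2 (l - r)) = qfact2 (n - r)"
    unfolding qfact2_def by (rule prod.reindex_bij_witness[where i = "\<lambda>d. d + r" and j = "\<lambda>l. l - r"]) auto
  moreover have "(\<Prod>l\<in>{r<..n}. fls_X_intpow (- ?b r)) = (fls_X_intpow (- (int (n - r) * ?b r)) :: rat fls)"
    by (simp only: prod_constant card_greaterThanAtMost fls_X_intpow_power mult_minus_right)
  ultimately show ?thesis
    by (simp add: prod_uminus prod.distrib)
qed

lemma alternant_factor_odd_ladder: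
  assumes rn: "r \<le> n"
  shows "alternant_factor (odd_ladder n) r n =
    (-1) ^ n * fls_X_intpow (- factor_degree n r) * (qfact2 r * qfact2 (2 * n + 1 - r))"
proof -
  let ?b = "odd_ladder n" and ?u = "\<lambda>k. qint2 (2 * n + 1 - r - k)"
  have "2 * ?b r = 2 * int (2 * n + 1 - r - r)"
    using rn by (simp add: odd_ladder_def of_nat_diff)
  then have first: "fls_X_intpow (?b r) - fls_X_intpow (- ?b r) = fls_X_intpow (- ?b r) * ?u r"
    by (simp only: fls_X_intpow_diff_uminus qint2_def)
  have "(\<Prod>k<r. ?u k) * ?u r * (\<Prod>l\<in>{r<..n}. ?u l) = (\<Prod>d\<in>{Suc (n - r)..2 * n + 1 - r}. qint2 d)"
    unfolding prod_atMost_split_at[OF rn, where f = ?u, symmetric]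
    by (rule prod.reindex_bij_witness[where i = "\<lambda>d. 2 * n + 1 - r - d" and j = "\<lambda>k. 2 * n + 1 - r - k"])
      (use rn in auto)
  then have upper: "qfact2 (n - r) * ((\<Prod>k<r. ?u k) * ?u r * (\<Prod>l\<in>{r<..n}. ?u l)) = qfact2 (2 * n + 1 - r)"
    using qfact2_split[of "n - r" "2 * n + 1 - r"] by simp
  have "alternant_factor ?b r n = ((-1) ^ r * (-1) ^ (n - r)) *
      (fls_X_intpow (- ?b r) * fls_X_intpow (- (\<Sum>k<r. ?b k)) * fls_X_intpow (- (int (n - r) * ?b r))) *
      (qfact2 r * (qfact2 (n - r) * ((\<Prod>k<r. ?u k) * ?u r * (\<Prod>l\<in>{r<..n}. ?u l))))"
    unfolding alternant_factor_def first prod_sym_monom_odd_ladder_below[OF rn]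
      prod_sym_monom_odd_ladder_above[OF rn]
    by (simp only: mult_ac)
  also have "(-1) ^ r * (-1) ^ (n - r) = ((-1) ^ n :: rat fls)"
    using rn by (simp flip: power_add)
  also have "fls_X_intpow (- ?b r) * fls_X_intpow (- (\<Sum>k<r. ?b k)) * fls_X_intpow (- (int (n - r) * ?b r)) =
      (fls_X_intpow (- factor_degree n r) :: rat fls)"
  proof -
    have "- ?b r + - (\<Sum>k<r. ?b k) + - (int (n - r) * ?b r) = - factor_degree n r"
      using rn by (simp add: factor_degree_def of_nat_diff algebra_simps)
    then show ?thesis by (simp only: fls_X_intpow_times_fls_X_intpow)
  qed
  finally show ?thesis
    unfolding upper .
qed

lemma factor_degree_diff: "factor_degree n i - factor_degree n 0 = 2 * ((\<Sum>k<i. int k) - int i * int n)"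
proof -
  have gauss: "2 * (\<Sum>k<i. int k) = int i * (int i - 1)"
    by (induction i) (simp_all add: algebra_simps)
  have "(\<Sum>k<i. odd_ladder n k) = int i * (2 * int n + 1) - 2 * (\<Sum>k<i. int k)"
    by (simp add: odd_ladder_def sum_subtractf sum_distrib_left)
  then show ?thesis
    by (simp add: factor_degree_def odd_ladder_def gauss algebra_simps)
qed

lemma twice_shifted_omega_tildeB:
  "twice_shifted n (\<lambda>k. if k \<le> i then 1 else 0) (Suc k) = odd_ladder n (skip_at i k)"
  by (simp add: twice_shifted_def odd_ladder_def skip_at_def)

lemma omega_tildeB_0: "omega_tildeB 0 = (\<lambda>_. 0)"
  by (simp add: omega_tildeB_def fun_eq_iff)

lemma doubled_weyl_numB_omega_tildeB:
  assumes "i \<le> n"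
  shows "fls_compose_power (weyl_numB n (omega_tildeB i)) 2 * alternant_factor (odd_ladder n) i n =
    fls_X_intpow (- two_rho_degree n) * alternant_prod (odd_ladder n) (Suc n)"
proof -
  have "fls_compose_power (weyl_numB n (omega_tildeB i)) 2 =
      fls_X_intpow (- two_rho_degree n) * alternant_prod (\<lambda>k. odd_ladder n (skip_at i k)) n"
    using doubled_weyl_numB[of n "omega_tildeB i" "\<lambda>k. if k \<le> i then 1 else 0"]
    by (simp add: omega_tildeB_def twice_shifted_omega_tildeB)
  then show ?thesis
    by (simp add: alternant_prod_Suc_skip_at[OF assms] mult.assoc)
qed

lemma weyl_numB_zero_nonzero: "weyl_numB n (\<lambda>_. 0) \<noteq> 0"
proof
  assume "weyl_numB n (\<lambda>_. 0) = 0"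
  then have "fls_X_intpow (- two_rho_degree n) * alternant_prod (\<lambda>k. twice_shifted n (\<lambda>_. 0) (Suc k)) n = 0"
    using doubled_weyl_numB[of n "\<lambda>_. 0" "\<lambda>_. 0"] by simp
  moreover have "alternant_prod (\<lambda>k. twice_shifted n (\<lambda>_. 0) (Suc k)) n \<noteq> 0"
    by (rule alternant_prod_nonzero) (auto simp: twice_shifted_def)
  ultimately show False by (simp add: fls_shift_eq0_iff)
qed

lemma doubled_weyl_numB_omega_tildeB_ratio:
  assumes "i \<le> n"
  shows "fls_compose_power (weyl_numB n (omega_tildeB i)) 2 * fls_X_intpow (- factor_degree n i) =
    fls_compose_power (weyl_numB n (\<lambda>_. 0)) 2 * fls_X_intpow (- factor_degree n 0) *
    fls_compose_power (qbinom (2 * n + 1) i) 2"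
proof -
  define P where "P = qfact2 i * qfact2 (2 * n + 1 - i)"
  have "fls_compose_power (qbinom (2 * n + 1) i * qfact i * qfact (2 * n + 1 - i)) 2 =
      fls_compose_power (qfact (2 * n + 1)) 2"
    using assms by (simp only: qbinom_mult_qfact)
  then have qbinom: "qfact2 (2 * n + 1) = fls_compose_power (qbinom (2 * n + 1) i) 2 * P"
    by (simp add: fls_compose_power_qfact P_def mult.assoc)
  have "fls_compose_power (weyl_numB n (omega_tildeB i)) 2 * alternant_factor (odd_ladder n) i n =
      fls_compose_power (weyl_numB n (\<lambda>_. 0)) 2 * alternant_factor (odd_ladder n) 0 n"
    using doubled_weyl_numB_omega_tildeB[OF assms] doubled_weyl_numB_omega_tildeB[of 0 n]
    by (simp add: omega_tildeB_0)
  then have "fls_compose_power (weyl_numB n (omega_tildeB i)) 2 * ((-1) ^ n * fls_X_intpow (- factor_degree n i) * P) =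
      fls_compose_power (weyl_numB n (\<lambda>_. 0)) 2 *
        ((-1) ^ n * fls_X_intpow (- factor_degree n 0) * (qfact2 0 * qfact2 (2 * n + 1 - 0)))"
    unfolding alternant_factor_odd_ladder[OF assms] alternant_factor_odd_ladder[OF le0] P_def .
  moreover have "qfact2 0 = 1"
    by (simp add: qfact2_def)
  ultimately have "((-1) ^ n * P) * (fls_compose_power (weyl_numB n (omega_tildeB i)) 2 * fls_X_intpow (- factor_degree n i)) =
      ((-1) ^ n * P) * (fls_compose_power (weyl_numB n (\<lambda>_. 0)) 2 * fls_X_intpow (- factor_degree n 0) *
        fls_compose_power (qbinom (2 * n + 1) i) 2)"
    by (simp only: diff_zero mult_1_left qbinom) (simp only: mult_ac)
  moreover have "(-1) ^ n * P \<noteq> 0"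
    by (simp add: P_def qfact2_nonzero)
  ultimately show ?thesis
    by simp
qed

lemma weyl_numB_omega_tildeB:
  assumes "i \<le> n"
  shows "weyl_numB n (omega_tildeB i) = weyl_numB n (\<lambda>_. 0) *
    (fls_X_intpow ((\<Sum>k<i. int k) - int i * int n) * qbinom (2 * n + 1) i)"
proof (rule fls_compose_power_inj[of 2])
  let ?e = "(\<Sum>k<i. int k) - int i * int n"
  let ?N = "\<lambda>lam. fls_compose_power (weyl_numB n lam) 2"
  have "- factor_degree n 0 + factor_degree n i = int 2 * ?e"
    using factor_degree_diff[of n i] by simp
  then have shift: "fls_X_intpow (- factor_degree n 0) * fls_X_intpow (factor_degree n i) =
      fls_compose_power (fls_X_intpow ?e :: rat fls) 2"
    by (simp only: fls_X_intpow_times_fls_X_intpow fls_compose_power_X_intpow[OF pos2])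
  have "?N (omega_tildeB i) =
      ?N (omega_tildeB i) * (fls_X_intpow (- factor_degree n i) * fls_X_intpow (factor_degree n i))"
    by (simp only: fls_X_intpow_times_fls_X_intpow) simp
  also have "\<dots> = ?N (\<lambda>_. 0) * fls_compose_power (qbinom (2 * n + 1) i) 2 *
      (fls_X_intpow (- factor_degree n 0) * fls_X_intpow (factor_degree n i))"
    using doubled_weyl_numB_omega_tildeB_ratio[OF assms] by (simp only: mult_ac)
  also have "\<dots> = fls_compose_power (weyl_numB n (\<lambda>_. 0) * (fls_X_intpow ?e * qbinom (2 * n + 1) i)) 2"
    unfolding shift by (simp only: fls_compose_power_mult mult_ac)
  finally show "?N (omega_tildeB i) =
      fls_compose_power (weyl_numB n (\<lambda>_. 0) * (fls_X_intpow ?e * qbinom (2 * n + 1) i)) 2" .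
qed simp

lemma ps_tildeB_eqI:
  assumes "weyl_numB n lam = weyl_numB n (\<lambda>_. 0) * (fls_X_intpow e * f)"
    and "weyl_numB n (\<lambda>_. 0) \<noteq> 0" and "f \<noteq> 0" and "fls_subdegree f = 0"
  shows "ps_tildeB n lam = f"
proof -
  have "psB n lam = fls_shift (- e) f"
    using assms(1,2) by (simp add: psB_def fls_X_intpow_times_conv_shift)
  then show ?thesis
    using assms(3,4) by (simp add: ps_tildeB_def)
qed

theorem proposition5p26:
  fixes n i :: nat
  assumes "1 \<le> n" and "1 \<le> i" and "i \<le> n"
  shows "ps_tildeB n (omega_tildeB i) = qbinom (2 * n + 1) i"
proof (rule ps_tildeB_eqI)
  show "weyl_numB n (omega_tildeB i) = weyl_numB n (\<lambda>_. 0) *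
      (fls_X_intpow ((\<Sum>k<i. int k) - int i * int n) * qbinom (2 * n + 1) i)"
    using assms(3) by (rule weyl_numB_omega_tildeB)
  show "weyl_numB n (\<lambda>_. 0) \<noteq> 0"
    by (rule weyl_numB_zero_nonzero)
  show "qbinom (2 * n + 1) i \<noteq> 0" and "fls_subdegree (qbinom (2 * n + 1) i) = 0"
    using qbinom_nonzero_subdegree[of i "2 * n + 1"] assms(3) by simp_all
qed

end
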